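(* Let $L\ge 2$ and let $M_1,\dots,M_L$ be pairwise distinct positive integers. Let $N$ be an integer with $0\le N<\operatorname{lcm}(M_1,\dots,M_L)$, and for $1\le i\le L$ let $r_i\in\{0,\dots,M_i-1\}$ be the remainder of $N$ modulo $M_i$ and $n_i=(N-r_i)/M_i$ the corresponding folding number. Let $\tilde r_1,\dots,\tilde r_L$ be integers with $0\le\tilde r_i\le M_i-1$ (erroneous remainders) and put $\Delta r_i=\tilde r_i-r_i$. Run the single-stage algorithm (described in the context) on the moduli $M_1,\dots,M_L$ with reference index $k=1$ and inputs $\tilde r_1,\dots,\tilde r_L$, producing $\hat n_1,\dots,\hat n_L$. Then $\hat n_i=n_i$ for all $1\le i\le L$ if and only if $$-\frac{\gcd(M_1,M_i)}{2}\le \Delta r_i-\Delta r_1<\frac{\gcd(M_1,M_i)}{2}\quad\text{for all }2\le i\le L.$$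
   Context: For $x\in\mathbb R$, $[x]$ denotes the unique integer with $-1/2\le x-[x]<1/2$. Single-stage algorithm: let $P_1,\dots,P_m$ ($m\ge2$) be pairwise distinct positive integers, $k\in\{1,\dots,m\}$ a reference index, and $x_1,\dots,x_m$ integers. For each $i\ne k$ put $m_{ki}=\gcd(P_k,P_i)$, $\Gamma_{ki}=P_k/m_{ki}$, $\Gamma_{ik}=P_i/m_{ki}$, $\hat q_{ik}=[(x_i-x_k)/m_{ki}]$; let $\bar\Gamma_{ki}$ be a multiplicative inverse of $\Gamma_{ki}$ modulo $\Gamma_{ik}$, and let $\hat\xi_{ik}\in\{0,\dots,\Gamma_{ik}-1\}$ with $\hat\xi_{ik}\equiv\hat q_{ik}\bar\Gamma_{ki}\pmod{\Gamma_{ik}}$. Let $\hat n_k$ be the least nonnegative integer $y$ with $y\equiv\hat\xi_{ik}\pmod{\Gamma_{ik}}$ for all $i\ne k$ (if no such $y$ exists the algorithm fails and its outputs are regarded as not equal to any target values). For $i\ne k$ set $\hat n_i=(\hat n_k\Gamma_{ki}-\hat q_{ik})/\Gamma_{ik}$. Outputs: $\hat n_1,\dots,\hat n_m$ and the estimate $[\frac1m\sum_{i=1}^m(\hat n_iP_i+x_i)]$. *)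

theory Defs
  imports "HOL-Number_Theory.Number_Theory"
begin

definition rnd :: "real \<Rightarrow> int" where
  "rnd x = (THE z. - (1/2) \<le> x - of_int z \<and> x - of_int z < 1/2)"

text \<open>Returns None if the algorithm fails (no solution of the congruence system),
  otherwise Some of the folding-number estimates (meaningful on {1..m}).\<close>
definition ss_nhat :: "nat \<Rightarrow> (nat \<Rightarrow> int) \<Rightarrow> nat \<Rightarrow> (nat \<Rightarrow> int) \<Rightarrow> (nat \<Rightarrow> int) option" where
  "ss_nhat m P k x =
    (let mk = (\<lambda>i. gcd (P k) (P i));
         Gki = (\<lambda>i. P k div mk i);
         Gik = (\<lambda>i. P i div mk i);
         q = (\<lambda>i. rnd (of_int (x i - x k) / of_int (mk i)));
         binv = (\<lambda>i. SOME b. [Gki i * b = 1] (mod Gik i));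
         xi = (\<lambda>i. (q i * binv i) mod Gik i);
         sol = (\<lambda>y::nat. \<forall>i\<in>{1..m} - {k}. [int y = xi i] (mod Gik i))
     in if \<exists>y. sol y then
          (let nk = int (LEAST y. sol y)
           in Some (\<lambda>i. if i = k then nk else (nk * Gki i - q i) div Gik i))
        else None)"

end

(* Write g = gcd (M 1) (M i). From N = n_1 M_1 + r_1 = n_i M_i + r_i, the difference r_i - r_1
   is g times the integer n_1 (M_1/g) - n_i (M_i/g); hence the rounded quotient computed from the
   erroneous remainders equals it exactly when (\<Delta>r_i - \<Delta>r_1)/g rounds to 0, which is the
   stated window. If all these quotients are exact, n_1 solves the congruence system for the
   reference folding number; two solutions differ by a multiple of lcm/M_1, and n_1 M_1 \<le> N < lcm,
   so n_1 is the least solution and back-substitution recovers every n_i. Conversely, correct outputs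
   force every quotient to be exact by the same back-substitution. *)

theory Submission
  imports Defs
begin

lemma rnd_eq_iff: "rnd x = z \<longleftrightarrow> - (1/2) \<le> x - of_int z \<and> x - of_int z < 1/2"
proof -
  have "\<exists>!z. - (1/2) \<le> x - of_int z \<and> x - of_int z < 1/2"
  proof (rule ex1I)
    show "- (1/2) \<le> x - of_int \<lfloor>x + 1/2\<rfloor> \<and> x - of_int \<lfloor>x + 1/2\<rfloor> < 1/2"
      by linarith
  next
    fix z assume "- (1/2) \<le> x - of_int z \<and> x - of_int z < 1/2"
    then show "z = \<lfloor>x + 1/2\<rfloor>" by (simp add: floor_eq_iff) linarith
  qed
  then show ?thesis
    unfolding rnd_def by (metis (mono_tags, lifting) theI')
qed

lemma rnd_quotient_eq_iff:
  fixes c d g :: int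
  assumes "g > 0"
  shows "rnd (of_int (c * g + d) / of_int g) = c \<longleftrightarrow>
    - (of_int g / 2) \<le> real_of_int d \<and> real_of_int d < of_int g / 2"
proof -
  have "of_int (c * g + d) / of_int g - of_int c = real_of_int d / of_int g"
    using assms by (simp add: field_simps)
  then show ?thesis
    using assms by (simp add: rnd_eq_iff field_simps)
qed

lemma cong_mult_inverse_iff:
  fixes a b c y m :: int
  assumes "[a * b = 1] (mod m)"
  shows "[y = c * b] (mod m) \<longleftrightarrow> [y * a = c] (mod m)"
proof -
  have "coprime a m"
    using assms coprime_iff_invertible_int by blast
  moreover have "[c * b * a = c] (mod m)"
    using cong_scalar_left[OF assms, of c] by (simp add: ac_simps)
  ultimately show ?thesis
    by (metis cong_mult_rcancel cong_sym cong_trans)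
qed

lemma lcm_dvd_of_congs:
  fixes a y z :: int and b :: "'i \<Rightarrow> int"
  assumes "\<forall>i\<in>I. [y * (a div gcd a (b i)) = z * (a div gcd a (b i))] (mod b i div gcd a (b i))"
  shows "Lcm (insert a (b ` I)) dvd (y - z) * a"
proof (rule Lcm_least)
  fix m assume "m \<in> insert a (b ` I)"
  then consider "m = a" | i where "i \<in> I" "m = b i" by blast
  then show "m dvd (y - z) * a"
  proof cases
    case (2 i)
    then have "b i div gcd a (b i) dvd (y - z) * (a div gcd a (b i))"
      using assms by (simp add: cong_iff_dvd_diff algebra_simps)
    then have "b i div gcd a (b i) * gcd a (b i) dvd (y - z) * (a div gcd a (b i) * gcd a (b i))"
      unfolding mult.assoc[symmetric] by (rule mult_dvd_mono) simp
    then show ?thesis using 2 by simp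
  qed simp
qed

definition ss_quotient :: "(nat \<Rightarrow> int) \<Rightarrow> nat \<Rightarrow> (nat \<Rightarrow> int) \<Rightarrow> nat \<Rightarrow> int" where
  "ss_quotient P k x i = rnd (of_int (x i - x k) / of_int (gcd (P k) (P i)))"

text \<open>The congruence system for \<open>\<hat>n\<^sub>k\<close> with the inverse of \<open>\<Gamma>\<^sub>k\<^sub>i\<close> multiplied out,
  so that it no longer depends on which inverse \<open>SOME\<close> picks.\<close>
definition ss_solution :: "nat \<Rightarrow> (nat \<Rightarrow> int) \<Rightarrow> nat \<Rightarrow> (nat \<Rightarrow> int) \<Rightarrow> nat \<Rightarrow> bool" where
  "ss_solution m P k x y \<longleftrightarrow> (\<forall>i\<in>{1..m} - {k}.
     [int y * (P k div gcd (P k) (P i)) = ss_quotient P k x i] (mod P i div gcd (P k) (P i)))"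

definition ss_true_quotient :: "(nat \<Rightarrow> int) \<Rightarrow> nat \<Rightarrow> int \<Rightarrow> nat \<Rightarrow> int" where
  "ss_true_quotient P k N i = N div P k * (P k div gcd (P k) (P i)) - N div P i * (P i div gcd (P k) (P i))"

lemma ss_true_quotient_mult_gcd:
  "ss_true_quotient P k N i * gcd (P k) (P i) = N mod P i - N mod P k"
proof -
  have "ss_true_quotient P k N i * gcd (P k) (P i)
      = N div P k * (P k div gcd (P k) (P i) * gcd (P k) (P i))
        - N div P i * (P i div gcd (P k) (P i) * gcd (P k) (P i))"
    unfolding ss_true_quotient_def by (simp only: left_diff_distrib mult.assoc)
  also have "\<dots> = N div P k * P k - N div P i * P i"
    by simp
  also have "\<dots> = N mod P i - N mod P k"
    using div_mult_mod_eq[of N "P k"] div_mult_mod_eq[of N "P i"] by linarith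
  finally show ?thesis .
qed

lemma ss_nhat_eq:
  assumes "P k \<noteq> 0"
  shows "ss_nhat m P k x =
    (if \<exists>y. ss_solution m P k x y
     then Some (\<lambda>i. if i = k then int (Least (ss_solution m P k x))
       else (int (Least (ss_solution m P k x)) * (P k div gcd (P k) (P i)) - ss_quotient P k x i)
         div (P i div gcd (P k) (P i)))
     else None)"
proof -
  have inverse: "[P k div gcd (P k) (P i) * (SOME b. [P k div gcd (P k) (P i) * b = 1]
      (mod P i div gcd (P k) (P i))) = 1] (mod P i div gcd (P k) (P i))" for i
    using assms by (metis someI_ex cong_solve_coprime_int div_gcd_coprime)
  have solution: "(\<lambda>y::nat. \<forall>i\<in>{1..m} - {k}. [int y = rnd (of_int (x i - x k) / of_int (gcd (P k) (P i)))
      * (SOME b. [P k div gcd (P k) (P i) * b = 1] (mod P i div gcd (P k) (P i)))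
      mod (P i div gcd (P k) (P i))] (mod P i div gcd (P k) (P i)))
      = ss_solution m P k x"
    unfolding ss_solution_def ss_quotient_def by (simp add: cong_mult_inverse_iff[OF inverse])
  show ?thesis
    unfolding ss_nhat_def Let_def solution ss_quotient_def ..
qed

lemma ss_solutions_congruent:
  assumes "k \<in> {1..m}" "ss_solution m P k x y" "ss_solution m P k x z"
  shows "Lcm (P ` {1..m}) dvd (int y - int z) * P k"
proof -
  have "P ` {1..m} = insert (P k) (P ` ({1..m} - {k}))" using assms(1) by blast
  moreover have "[int y * (P k div gcd (P k) (P i)) = int z * (P k div gcd (P k) (P i))]
      (mod P i div gcd (P k) (P i))" if "i \<in> {1..m} - {k}" for i
  proof -
    have "[int y * (P k div gcd (P k) (P i)) = ss_quotient P k x i] (mod P i div gcd (P k) (P i))"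
      "[int z * (P k div gcd (P k) (P i)) = ss_quotient P k x i] (mod P i div gcd (P k) (P i))"
      using assms(2,3) that unfolding ss_solution_def by blast+
    then show ?thesis by (rule cong_trans[OF _ cong_sym])
  qed
  ultimately show ?thesis
    using lcm_dvd_of_congs[where I = "{1..m} - {k}" and a = "P k" and b = P] by simp
qed

lemma ss_solution_Least_eq:
  assumes "k \<in> {1..m}" "P k > 0"
    and "ss_solution m P k x n" "int n * P k < Lcm (P ` {1..m})"
  shows "Least (ss_solution m P k x) = n"
proof -
  define y0 where "y0 = Least (ss_solution m P k x)"
  have "ss_solution m P k x y0" "y0 \<le> n"
    unfolding y0_def using assms(3) by (auto intro: LeastI Least_le)
  then have "Lcm (P ` {1..m}) dvd (int n - int y0) * P k"
    using ss_solutions_congruent assms(1,3) by blast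
  moreover have "(int n - int y0) * P k < Lcm (P ` {1..m})"
  proof -
    have "(int n - int y0) * P k \<le> int n * P k" using assms(2) by simp
    then show ?thesis using assms(4) by linarith
  qed
  ultimately have "\<not> (int n - int y0) * P k > 0"
    using zdvd_not_zless by blast
  then show ?thesis
    using \<open>y0 \<le> n\<close> assms(2) unfolding y0_def by (simp add: zero_less_mult_iff)
qed

lemma ss_nhat_correct_imp_quotient_eq:
  assumes "k \<in> {1..m}" "P k \<noteq> 0"
    and "ss_nhat m P k x = Some f" "\<forall>i\<in>{1..m}. f i = N div P i"
    and "i \<in> {1..m} - {k}"
  shows "ss_quotient P k x i = ss_true_quotient P k N i"
proof -
  define y0 where "y0 = Least (ss_solution m P k x)"
  have ex: "\<exists>y. ss_solution m P k x y"
    using assms(2,3) ss_nhat_eq[of P k m x] by (auto split: if_splits)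
  then have "P i div gcd (P k) (P i) dvd int y0 * (P k div gcd (P k) (P i)) - ss_quotient P k x i"
    using LeastI_ex[OF ex] assms(5) unfolding y0_def ss_solution_def cong_iff_dvd_diff by blast
  then have "int y0 * (P k div gcd (P k) (P i)) - ss_quotient P k x i
      = (int y0 * (P k div gcd (P k) (P i)) - ss_quotient P k x i) div (P i div gcd (P k) (P i))
        * (P i div gcd (P k) (P i))"
    by simp
  moreover have f: "f = (\<lambda>i. if i = k then int y0
      else (int y0 * (P k div gcd (P k) (P i)) - ss_quotient P k x i) div (P i div gcd (P k) (P i)))"
    using assms(2,3) ex ss_nhat_eq[of P k m x] unfolding y0_def by simp
  then have "int y0 = N div P k"
    using bspec[OF assms(4,1)] by simp
  moreover have "(int y0 * (P k div gcd (P k) (P i)) - ss_quotient P k x i) div (P i div gcd (P k) (P i))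
      = N div P i"
    using bspec[OF assms(4), of i] assms(5) f by simp
  ultimately show ?thesis
    unfolding ss_true_quotient_def by simp
qed

lemma ss_nhat_correct_if_quotient_eq:
  fixes P x :: "nat \<Rightarrow> int" and N :: int
  assumes k: "k \<in> {1..m}" and pos: "\<And>i. i \<in> {1..m} \<Longrightarrow> P i > 0"
    and N: "0 \<le> N" "N < Lcm (P ` {1..m})"
    and exact: "\<forall>i\<in>{1..m} - {k}. ss_quotient P k x i = ss_true_quotient P k N i"
  shows "\<exists>f. ss_nhat m P k x = Some f \<and> (\<forall>i\<in>{1..m}. f i = N div P i)"
proof -
  have Pk: "P k > 0" using pos[OF k] .
  define n where "n = nat (N div P k)"
  have n: "int n = N div P k" using N Pk by (simp add: n_def pos_imp_zdiv_nonneg_iff)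
  have sol: "ss_solution m P k x n"
    using exact unfolding ss_solution_def ss_true_quotient_def n by (simp add: cong_iff_dvd_diff)
  moreover have "int n * P k < Lcm (P ` {1..m})"
    unfolding n using N div_mult_mod_eq[of N "P k"] pos_mod_sign[OF Pk, of N] by linarith
  ultimately have least: "int (Least (ss_solution m P k x)) = N div P k"
    using ss_solution_Least_eq[where P = P, OF k Pk] n by simp
  have "(N div P k * (P k div gcd (P k) (P i)) - ss_quotient P k x i) div (P i div gcd (P k) (P i))
      = N div P i" if "i \<in> {1..m} - {k}" for i
  proof -
    have "P i div gcd (P k) (P i) > 0"
      using pos[of i] that by (simp add: pos_imp_zdiv_pos_iff zdvd_imp_le)
    then show ?thesis using exact that unfolding ss_true_quotient_def by simp
  qed
  then show ?thesis
    using ss_nhat_eq[of P k m x] sol Pk least by auto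
qed

lemma ss_nhat_correct_iff_quotient_eq:
  fixes P x :: "nat \<Rightarrow> int" and N :: int
  assumes "k \<in> {1..m}" "\<And>i. i \<in> {1..m} \<Longrightarrow> P i > 0"
    and "0 \<le> N" "N < Lcm (P ` {1..m})"
  shows "(\<exists>f. ss_nhat m P k x = Some f \<and> (\<forall>i\<in>{1..m}. f i = N div P i)) \<longleftrightarrow>
    (\<forall>i\<in>{1..m} - {k}. ss_quotient P k x i = ss_true_quotient P k N i)"
proof
  assume "\<exists>f. ss_nhat m P k x = Some f \<and> (\<forall>i\<in>{1..m}. f i = N div P i)"
  then show "\<forall>i\<in>{1..m} - {k}. ss_quotient P k x i = ss_true_quotient P k N i"
    using ss_nhat_correct_imp_quotient_eq[OF assms(1) _ _ _, of P] assms(2)[OF assms(1)] by fastforce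
next
  assume "\<forall>i\<in>{1..m} - {k}. ss_quotient P k x i = ss_true_quotient P k N i"
  then show "\<exists>f. ss_nhat m P k x = Some f \<and> (\<forall>i\<in>{1..m}. f i = N div P i)"
    using ss_nhat_correct_if_quotient_eq[of k m P N x] assms by blast
qed

lemma ss_quotient_eq_iff:
  assumes "gcd (P k) (P i) > 0"
  shows "ss_quotient P k x i = ss_true_quotient P k N i
    \<longleftrightarrow> - (real_of_int (gcd (P k) (P i)) / 2)
          \<le> real_of_int ((x i - N mod P i) - (x k - N mod P k))
        \<and> real_of_int ((x i - N mod P i) - (x k - N mod P k))
          < real_of_int (gcd (P k) (P i)) / 2"
proof -
  have "x i - x k = ss_true_quotient P k N i * gcd (P k) (P i)
      + ((x i - N mod P i) - (x k - N mod P k))"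
    unfolding ss_true_quotient_mult_gcd by simp
  then show ?thesis
    unfolding ss_quotient_def using assms by (simp only: rnd_quotient_eq_iff)
qed

theorem theorem1:
  fixes L :: nat and M :: "nat \<Rightarrow> int" and N :: int and rt :: "nat \<Rightarrow> int"
  assumes "L \<ge> 2"
    and "\<forall>i\<in>{1..L}. M i > 0"
    and "inj_on M {1..L}"
    and "0 \<le> N" and "N < Lcm (M ` {1..L})"
    and "\<forall>i\<in>{1..L}. 0 \<le> rt i \<and> rt i \<le> M i - 1"
  shows "(\<exists>f. ss_nhat L M 1 rt = Some f \<and>
            (\<forall>i\<in>{1..L}. f i = (N - N mod M i) div M i))
         \<longleftrightarrow>
         (\<forall>i\<in>{2..L}.
            - (real_of_int (gcd (M 1) (M i)) / 2)
              \<le> real_of_int ((rt i - N mod M i) - (rt 1 - N mod M 1))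
            \<and> real_of_int ((rt i - N mod M i) - (rt 1 - N mod M 1))
              < real_of_int (gcd (M 1) (M i)) / 2)"
proof -
  have pos: "M i > 0" if "i \<in> {1..L}" for i using assms(2) that by blast
  have "(N - N mod M i) div M i = N div M i" for i
    by (cases "M i = 0") (simp_all add: minus_mod_eq_mult_div)
  moreover have "gcd (M 1) (M i) > 0" for i using pos[of 1] assms(1) by simp
  moreover have "{1..L} - {1} = {2..L}" by auto
  ultimately show ?thesis
    using ss_nhat_correct_iff_quotient_eq[of 1 L M N rt] ss_quotient_eq_iff[of M 1 _ rt N] pos assms(1,4,5)
    by simp
qed

end
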